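(* Let $p>3$ and $q>6p^4$ be primes, $G=\mathbb{Z}_6^5\times\mathbb{Z}_q$, $H=\mathbb{Z}_p^4$, $A\subset G$ the set defined in the context, $B\subset H$ a spectral set with $|B|=2p$, $\{v_1,\dots,v_4\}$ a basis of $H$ over $\mathbb{Z}_p$, and $t:A\to H$ given by $t(0_{\mathbb{Z}_6^5},k)=v_k$ for $1\le k\le4$ and $t(a)=0_H$ otherwise. Then $P_t=\bigcup_{a\in A}\{a\}\times(t(a)+B)$ is not spectral in $G\times H$.
   Context: A subset $X$ of a finite abelian group $E$ is spectral if there is a set $S$ of characters of $E$ with $|S|=|X|$ and $\hat 1_X(s-s')=0$ for all distinct $s,s'\in S$, where $\hat f(\chi)=\sum_x f(x)\chi(x)$. Characters of $G\times H$ are identified with vectors $(\gamma_1,\gamma_2,\rho)\in\mathbb{Z}_6^5\times\mathbb{Z}_q\times\mathbb{Z}_p^4$ acting by $(u_1,u_2,w)\mapsto e^{2\pi i(\langle\gamma_1,u_1\rangle/6+\gamma_2u_2/q+\langle\rho,w\rangle/p)}$. Construction of $A$: let $v=(1,2,3,4,5)\in\mathbb{Z}_6^5$; for $\pi\in S_5$ let $\pi(v)$ be the vector with permuted coordinates and $A_\pi=\{x\in\mathbb{Z}_6^5:\langle \pi(v),x\rangle\equiv 0\pmod 6\}$. Enumerate $S_5$ as $\pi_0,\dots,\pi_{119}$; for $0\le k\le119$ set $A_k=A_{\pi_k}\times\{k\}$, for $120\le k\le q-1$ set $A_k=A_{\pi_0}\times\{k\}$, and $A=\bigcup_{k=0}^{q-1}A_k$.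 Known fact (may be used): $A$ is a tile of $G$ but is not spectral in $G$. *)

theory Defs
  imports Complex_Main "HOL-Combinatorics.Permutations" "HOL-Computational_Algebra.Primes"
begin

text \<open>A finite abelian group Z_{m_0} x ... x Z_{m_{n-1}} is represented by the list of
  moduli ms; its elements are integer lists x of length n with 0 <= x!i < ms!i.
  Characters are identified with elements of the same set, chi acting on x by
  exp(2 pi i sum_i chi_i x_i / m_i).\<close>

definition cgrp :: "int list \<Rightarrow> int list set" where
  "cgrp ms = {x. length x = length ms \<and> (\<forall>i<length ms. 0 \<le> x!i \<and> x!i < ms!i)}"

definition cpair :: "int list \<Rightarrow> int list \<Rightarrow> int list \<Rightarrow> complex" where
  "cpair ms chi x = cis (2 * pi * (\<Sum>i<length ms. of_int (chi!i * x!i) / of_int (ms!i)))"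

definition cadd :: "int list \<Rightarrow> int list \<Rightarrow> int list \<Rightarrow> int list" where
  "cadd ms x y = map (\<lambda>i. (x!i + y!i) mod ms!i) [0..<length ms]"

definition csub :: "int list \<Rightarrow> int list \<Rightarrow> int list \<Rightarrow> int list" where
  "csub ms x y = map (\<lambda>i. (x!i - y!i) mod ms!i) [0..<length ms]"

definition ft_ind :: "int list \<Rightarrow> int list set \<Rightarrow> int list \<Rightarrow> complex" where
  "ft_ind ms X chi = (\<Sum>x\<in>X. cpair ms chi x)"

definition spectral_in :: "int list \<Rightarrow> int list set \<Rightarrow> bool" where
  "spectral_in ms X \<longleftrightarrow> X \<subseteq> cgrp ms \<and>
     (\<exists>S. S \<subseteq> cgrp ms \<and> card S = card X \<and>
          (\<forall>s\<in>S. \<forall>s'\<in>S. s \<noteq> s' \<longrightarrow> ft_ind ms X (csub ms s s') = 0))"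

definition msG :: "int \<Rightarrow> int list" where "msG q = replicate 5 6 @ [q]"
definition msH :: "int \<Rightarrow> int list" where "msH p = replicate 4 p"
definition msGH :: "int \<Rightarrow> int \<Rightarrow> int list" where "msGH q p = msG q @ msH p"

text \<open>A_pi = {x in Z_6^5 : <pi(v), x> = 0 mod 6}, v = (1,..,5), (pi(v))_i = v_{pi(i)}
  with coordinates indexed 0..4, so v_j = j+1.\<close>
definition Api :: "(nat \<Rightarrow> nat) \<Rightarrow> int list set" where
  "Api \<sigma> = {x \<in> cgrp (replicate 5 6). (\<Sum>i<5. int (\<sigma> i + 1) * x!i) mod 6 = 0}"

text \<open>enum k = pi_k, an enumeration of S_5 (permutations of {0..4}).\<close>
definition setA :: "(nat \<Rightarrow> nat \<Rightarrow> nat) \<Rightarrow> int \<Rightarrow> int list set" where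
  "setA enum q = {x @ [k] | x k. 0 \<le> k \<and> k < q \<and>
      x \<in> Api (enum (if k < 120 then nat k else 0))}"

definition lincombH :: "int \<Rightarrow> (nat \<Rightarrow> int list) \<Rightarrow> (nat \<Rightarrow> int) \<Rightarrow> int list" where
  "lincombH p v c = map (\<lambda>i. (\<Sum>j\<in>{1..4}. c j * (v j)!i) mod p) [0..<4]"

definition basisH :: "int \<Rightarrow> (nat \<Rightarrow> int list) \<Rightarrow> bool" where
  "basisH p v \<longleftrightarrow> (\<forall>j\<in>{1..4}. v j \<in> cgrp (msH p)) \<and>
     (\<forall>h\<in>cgrp (msH p). \<exists>c. (\<forall>j\<in>{1..4}. 0 \<le> c j \<and> c j < p) \<and> lincombH p v c = h) \<and>
     (\<forall>c. (\<forall>j\<in>{1..4}. 0 \<le> c j \<and> c j < p) \<and> lincombH p v c = replicate 4 0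
            \<longrightarrow> (\<forall>j\<in>{1..4}. c j = 0))"

definition tmap :: "(nat \<Rightarrow> int list) \<Rightarrow> int list \<Rightarrow> int list" where
  "tmap v a = (if take 5 a = replicate 5 0 \<and> 1 \<le> a!5 \<and> a!5 \<le> 4
               then v (nat (a!5)) else replicate 4 0)"

definition Pt :: "int \<Rightarrow> int list set \<Rightarrow> (int list \<Rightarrow> int list) \<Rightarrow> int list set \<Rightarrow> int list set" where
  "Pt p A t B = {a @ cadd (msH p) (t a) b | a b. a \<in> A \<and> b \<in> B}"

end

theory Submission
  imports Defs "HOL-Library.Real_Mod"
begin

text \<open>Suppose S were a spectrum of P_t and group its elements by their Z_q-coordinate c
  and their H-coordinate rho. For s, s' in S with the same c, the Fourier transform of the
  indicator of P_t at s - s' factors as F * (transform of the indicator of B at rho - rho'),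
  where F is a twisted transform of A; it equals 6^4 N plus the four numbers chi(v_k) - 1,
  with N a natural number.

  If rho differs from rho', then F is nonzero, because otherwise N = 0 and the character
  rho - rho' is trivial on the basis v_1, ..., v_4. So the H-coordinates within a layer c are
  pairwise B-orthogonal, and there are at most |B| of them. If rho = rho', then F = 0 forces
  N = 0, i.e. the Z_6^5-coordinates of these elements form a packing for each of the 120
  cyclic groups generated by pi(v); a counting argument modulo 3 shows that such a set has
  fewer than 6^4 elements. Hence |S| <= q |B| (6^4 - 1) < q 6^4 |B| = |P_t|.\<close>

section \<open>Characters of finite products of cyclic groups\<close>

lemma cis_sum: "finite I \<Longrightarrow> cis (\<Sum>i\<in>I. f i) = (\<Prod>i\<in>I. cis (f i))"
  by (induction I rule: finite_induct) (auto simp: cis_mult[symmetric])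

lemma cis_2pi_div_eq_1_iff:
  fixes a m :: int assumes "m > 0"
  shows "cis (2 * pi * of_int a / of_int m) = 1 \<longleftrightarrow> m dvd a"
proof
  assume "m dvd a"
  then obtain k where "a = m * k" by auto
  then have "2 * pi * of_int a / of_int m = 2 * pi * real_of_int k" using assms by simp
  then show "cis (2 * pi * of_int a / of_int m) = 1" by simp
next
  assume "cis (2 * pi * of_int a / of_int m) = 1"
  then obtain n where "2 * pi * of_int a / of_int m = of_int n * (2 * pi)"
    by (auto simp: cis_eq_1_iff)
  then have "real_of_int a = of_int n * of_int m" using assms by (simp add: field_simps)
  then have "a = n * m" by (metis of_int_eq_iff of_int_mult)
  then show "m dvd a" by simp
qed

lemma sum_roots_of_unity:
  fixes a m :: int assumes "m > 0"
  shows "(\<Sum>t\<in>{0..<m}. cis (2 * pi * of_int (a * t) / of_int m)) = (if m dvd a then of_int m else 0)"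
proof -
  define z where "z = cis (2 * pi * of_int a / of_int m)"
  have "{0..<m} = int ` {..<nat m}"
    using assms by (auto simp: image_iff intro!: bexI[of _ "nat _"])
  moreover have "cis (2 * pi * of_int (a * int t) / of_int m) = z ^ t" for t
    by (simp add: z_def DeMoivre algebra_simps)
  ultimately have sum_z: "(\<Sum>t\<in>{0..<m}. cis (2 * pi * of_int (a * t) / of_int m)) = (\<Sum>t<nat m. z ^ t)"
    by (simp add: sum.reindex)
  show ?thesis
  proof (cases "m dvd a")
    case True
    then have "z = 1" using cis_2pi_div_eq_1_iff[OF assms] by (simp add: z_def)
    then show ?thesis using sum_z True assms by simp
  next
    case False
    then have "z \<noteq> 1" using cis_2pi_div_eq_1_iff[OF assms] by (simp add: z_def)
    moreover have "z ^ nat m = 1" using assms by (simp add: z_def DeMoivre)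
    ultimately show ?thesis using sum_z False by (simp add: geometric_sum)
  qed
qed

lemma cpair_commute: "cpair ms c x = cpair ms x c"
  by (simp add: cpair_def mult.commute)

lemma cpair_prod: "cpair ms c x = (\<Prod>i<length ms. cis (2 * pi * (of_int (c!i * x!i) / of_int (ms!i))))"
  unfolding cpair_def sum_distrib_left by (simp add: cis_sum)

lemma cpair_cong:
  assumes "\<And>i. i < length ms \<Longrightarrow> x!i mod ms!i = y!i mod ms!i"
  shows "cpair ms c x = cpair ms c y"
proof -
  have "cis (2 * pi * (of_int (c!i * x!i) / of_int (ms!i)))
      = cis (2 * pi * (of_int (c!i * y!i) / of_int (ms!i)))" if i: "i < length ms" for i
  proof -
    obtain k where k: "x!i = y!i + ms!i * k"
      using assms[OF i] by (metis mod_eq_dvd_iff dvdE diff_eq_eq add.commute)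
    show ?thesis
    proof (cases "ms!i = 0")
      case False
      then have "2 * pi * (of_int (c!i * x!i) / of_int (ms!i))
          = 2 * pi * (of_int (c!i * y!i) / of_int (ms!i)) + 2 * pi * of_int (c!i * k)"
        unfolding k by (simp add: field_simps)
      then show ?thesis by (simp add: cis_mult[symmetric])
    qed (use k in simp)
  qed
  then show ?thesis unfolding cpair_prod by (intro prod.cong) auto
qed

lemma cpair_add_right:
  "cpair ms c (map (\<lambda>i. x!i + y!i) [0..<length ms]) = cpair ms c x * cpair ms c y"
  by (simp add: cpair_prod prod.distrib[symmetric] cis_mult distrib_left add_divide_distrib)

lemma cpair_cadd: "cpair ms c (cadd ms x y) = cpair ms c x * cpair ms c y"
  unfolding cpair_add_right[symmetric] cadd_def by (rule cpair_cong) (simp add: mod_mod_cancel)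

lemma cpair_csub: "cpair ms (csub ms s s') x = cpair ms s x * cnj (cpair ms s' x)"
proof -
  have "cpair ms x (csub ms s s') = cpair ms x (map (\<lambda>i. s!i + - s'!i) [0..<length ms])"
    unfolding csub_def by (rule cpair_cong) simp
  also have "\<dots> = cpair ms x s * cpair ms x (map (\<lambda>i. - s'!i) [0..<length ms])"
    unfolding cpair_add_right[symmetric] by (rule cpair_cong) simp
  also have "cpair ms x (map (\<lambda>i. - s'!i) [0..<length ms]) = cnj (cpair ms x s')"
    by (simp add: cpair_def cis_cnj sum_negf)
  finally show ?thesis by (simp add: cpair_commute)
qed

lemma cpair_append:
  assumes "length c1 = length ms1" "length x1 = length ms1"
  shows "cpair (ms1 @ ms2) (c1 @ c2) (x1 @ x2) = cpair ms1 c1 x1 * cpair ms2 c2 x2"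
proof -
  have "(\<Sum>i<a + b. f i) = (\<Sum>i<a. f i) + (\<Sum>i<b. f (a + i))" for a b and f :: "nat \<Rightarrow> real"
    by (induction b) (simp_all add: add.assoc)
  then show ?thesis
    unfolding cpair_def using assms by (simp add: nth_append distrib_left cis_mult)
qed

lemma cpair_eq_1: "(\<And>i. i < length ms \<Longrightarrow> c!i = 0 \<or> x!i = 0) \<Longrightarrow> cpair ms c x = 1"
  unfolding cpair_def by (subst sum.neutral) auto

lemma cpair_mult_cnj: "cpair ms c x * cnj (cpair ms c x) = 1"
  by (simp add: cpair_def cis_cnj cis_mult)

lemma Re_cpair_le_1: "Re (cpair ms c x) \<le> 1"
  and Re_cpair_ge_minus_1: "Re (cpair ms c x) \<ge> -1"
  by (simp_all add: cpair_def)

lemma cpair_eq_1_if_Re: "Re (cpair ms c x) = 1 \<Longrightarrow> cpair ms c x = 1"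
  by (simp add: cpair_def complex_eq_iff) (metis cos_one_sin_zero)

definition list_Pi :: "nat \<Rightarrow> (nat \<Rightarrow> 'a set) \<Rightarrow> 'a list set" where
  "list_Pi n F = {xs. length xs = n \<and> (\<forall>i<n. xs!i \<in> F i)}"

lemma list_Pi_0: "list_Pi 0 F = {[]}"
  by (auto simp: list_Pi_def)

lemma list_Pi_Suc: "list_Pi (Suc n) F = (\<lambda>(a, xs). a # xs) ` (F 0 \<times> list_Pi n (\<lambda>i. F (Suc i)))"
proof (rule set_eqI)
  fix xs
  show "xs \<in> list_Pi (Suc n) F \<longleftrightarrow> xs \<in> (\<lambda>(a, xs). a # xs) ` (F 0 \<times> list_Pi n (\<lambda>i. F (Suc i)))"
  proof
    assume "xs \<in> list_Pi (Suc n) F"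
    then show "xs \<in> (\<lambda>(a, xs). a # xs) ` (F 0 \<times> list_Pi n (\<lambda>i. F (Suc i)))"
      by (cases xs) (force simp: list_Pi_def)+
  qed (auto simp: list_Pi_def less_Suc_eq_0_disj)
qed

lemma finite_list_Pi: "(\<And>i. i < n \<Longrightarrow> finite (F i)) \<Longrightarrow> finite (list_Pi n F)"
  by (induction n arbitrary: F) (simp_all add: list_Pi_0 list_Pi_Suc)

lemma sum_prod_list_Pi:
  assumes "\<And>i. i < n \<Longrightarrow> finite (F i)"
  shows "(\<Sum>xs\<in>list_Pi n F. \<Prod>i<n. (\<phi> i (xs!i) :: 'b::comm_semiring_1)) = (\<Prod>i<n. \<Sum>t\<in>F i. \<phi> i t)"
  using assms
proof (induction n arbitrary: F \<phi>)
  case 0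
  then show ?case by (simp add: list_Pi_0)
next
  case (Suc n)
  let ?F' = "\<lambda>i. F (Suc i)"
  have inj: "inj_on (\<lambda>(a, xs). a # xs) (F 0 \<times> list_Pi n ?F')"
    by (auto simp: inj_on_def)
  have IH: "(\<Sum>xs\<in>list_Pi n ?F'. \<Prod>i<n. \<phi> (Suc i) (xs!i)) = (\<Prod>i<n. \<Sum>t\<in>F (Suc i). \<phi> (Suc i) t)"
    using Suc.IH[of ?F' "\<lambda>i. \<phi> (Suc i)"] Suc.prems by simp
  have "(\<Sum>xs\<in>list_Pi (Suc n) F. \<Prod>i<Suc n. \<phi> i (xs!i))
      = (\<Sum>(a, xs)\<in>F 0 \<times> list_Pi n ?F'. \<phi> 0 a * (\<Prod>i<n. \<phi> (Suc i) (xs!i)))"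
    unfolding list_Pi_Suc sum.reindex[OF inj]
    by (simp add: case_prod_unfold prod.lessThan_Suc_shift del: prod.lessThan_Suc)
  also have "\<dots> = (\<Sum>a\<in>F 0. \<phi> 0 a) * (\<Prod>i<n. \<Sum>t\<in>F (Suc i). \<phi> (Suc i) t)"
    unfolding IH[symmetric] by (simp add: sum_product sum.cartesian_product)
  finally show ?case
    by (simp add: prod.lessThan_Suc_shift del: prod.lessThan_Suc)
qed

lemma card_list_Pi:
  assumes "\<And>i. i < n \<Longrightarrow> finite (F i)"
  shows "card (list_Pi n F) = (\<Prod>i<n. card (F i))"
  using sum_prod_list_Pi[OF assms, where \<phi> = "\<lambda>_ _. 1::nat"] by simp

lemma cgrp_eq_list_Pi: "cgrp ms = list_Pi (length ms) (\<lambda>i. {0..<ms!i})"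
  by (auto simp: cgrp_def list_Pi_def)

lemma cgrp_replicate: "cgrp (replicate n m) = list_Pi n (\<lambda>_. {0..<m})"
  by (auto simp: cgrp_def list_Pi_def)

lemma finite_cgrp [simp]: "finite (cgrp ms)"
  unfolding cgrp_eq_list_Pi by (rule finite_list_Pi) simp

lemma sum_cpair_cgrp_replicate:
  fixes m :: int assumes "m > 0"
  shows "(\<Sum>x\<in>cgrp (replicate n m). cpair (replicate n m) \<eta> x)
        = (if \<forall>i<n. m dvd \<eta>!i then of_int m ^ n else 0)"
proof -
  have "(\<Sum>x\<in>cgrp (replicate n m). cpair (replicate n m) \<eta> x)
      = (\<Sum>x\<in>list_Pi n (\<lambda>_. {0..<m}). \<Prod>i<n. (\<lambda>i t. cis (2 * pi * of_int (\<eta>!i * t) / of_int m)) i (x!i))"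
    unfolding cgrp_replicate cpair_prod by (intro sum.cong refl prod.cong) auto
  also have "\<dots> = (\<Prod>i<n. \<Sum>t\<in>{0..<m}. cis (2 * pi * of_int (\<eta>!i * t) / of_int m))"
    by (rule sum_prod_list_Pi) simp
  also have "\<dots> = (\<Prod>i<n. if m dvd \<eta>!i then of_int m else 0)"
    using sum_roots_of_unity[OF assms] by simp
  finally show ?thesis
    by (auto simp: prod_zero_iff)
qed

lemma csub_self: "csub ms x x = replicate (length ms) 0"
  by (simp add: csub_def map_replicate_trivial)

lemma csub_in_cgrp: "(\<And>i. i < length ms \<Longrightarrow> ms!i > 0) \<Longrightarrow> csub ms x y \<in> cgrp ms"
  by (simp add: csub_def cgrp_def)

lemma cgrp_eqI:
  assumes "x \<in> cgrp ms" "y \<in> cgrp ms" "\<And>i. i < length ms \<Longrightarrow> ms!i dvd x!i - y!i"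
  shows "x = y"
proof (rule nth_equalityI)
  show "length x = length y" using assms by (simp add: cgrp_def)
  fix i assume "i < length x"
  then have i: "i < length ms" using assms(1) by (simp add: cgrp_def)
  have "x!i mod ms!i = y!i mod ms!i" using assms(3)[OF i] by (simp only: mod_eq_dvd_iff)
  moreover have "x!i mod ms!i = x!i" "y!i mod ms!i = y!i" using assms(1,2) i by (simp_all add: cgrp_def)
  ultimately show "x!i = y!i" by simp
qed

lemma csub_eq_0_iff:
  assumes "x \<in> cgrp ms" "y \<in> cgrp ms"
  shows "csub ms x y = replicate (length ms) 0 \<longleftrightarrow> x = y"
proof
  assume 0: "csub ms x y = replicate (length ms) 0"
  show "x = y"
  proof (rule cgrp_eqI[OF assms])
    fix i assume i: "i < length ms"
    then have "(x!i - y!i) mod ms!i = 0" using arg_cong[OF 0, of "\<lambda>l. l!i"] by (simp add: csub_def)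
    then show "ms!i dvd x!i - y!i" by (simp only: dvd_eq_mod_eq_0)
  qed
qed (simp add: csub_self)

lemma cadd_left_inj:
  assumes "x \<in> cgrp ms" "y \<in> cgrp ms" "cadd ms u x = cadd ms u y"
  shows "x = y"
proof (rule cgrp_eqI[OF assms(1,2)])
  fix i assume i: "i < length ms"
  then have "(u!i + x!i) mod ms!i = (u!i + y!i) mod ms!i"
    using arg_cong[OF assms(3), of "\<lambda>l. l!i"] by (simp add: cadd_def)
  then have "ms!i dvd (u!i + x!i) - (u!i + y!i)" by (simp only: mod_eq_dvd_iff)
  then show "ms!i dvd x!i - y!i" by simp
qed

lemma sum_mult_cnj_orthogonal:
  fixes \<chi> :: "'a \<Rightarrow> 'b \<Rightarrow> complex"
  assumes "finite R"
    and orth: "\<And>\<rho> \<rho>'. \<rho> \<in> R \<Longrightarrow> \<rho>' \<in> R \<Longrightarrow>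
      (\<Sum>b\<in>B. \<chi> \<rho> b * cnj (\<chi> \<rho>' b)) = (if \<rho>' = \<rho> then N else 0)"
  shows "(\<Sum>b\<in>B. (\<Sum>\<rho>\<in>R. a \<rho> * \<chi> \<rho> b) * cnj (\<Sum>\<rho>\<in>R. a \<rho> * \<chi> \<rho> b))
    = N * (\<Sum>\<rho>\<in>R. a \<rho> * cnj (a \<rho>))"
proof -
  have "(\<Sum>b\<in>B. (\<Sum>\<rho>\<in>R. a \<rho> * \<chi> \<rho> b) * cnj (\<Sum>\<rho>\<in>R. a \<rho> * \<chi> \<rho> b))
      = (\<Sum>b\<in>B. \<Sum>\<rho>'\<in>R. \<Sum>\<rho>\<in>R. a \<rho> * cnj (a \<rho>') * (\<chi> \<rho> b * cnj (\<chi> \<rho>' b)))"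
    by (simp add: cnj_sum sum_distrib_left sum_distrib_right algebra_simps)
  also have "\<dots> = (\<Sum>\<rho>'\<in>R. \<Sum>\<rho>\<in>R. a \<rho> * cnj (a \<rho>') * (\<Sum>b\<in>B. \<chi> \<rho> b * cnj (\<chi> \<rho>' b)))"
    by (simp add: sum_distrib_left sum.swap[of _ B])
  also have "\<dots> = (\<Sum>\<rho>'\<in>R. \<Sum>\<rho>\<in>R. if \<rho>' = \<rho> then a \<rho> * cnj (a \<rho>) * N else 0)"
    using orth by (intro sum.cong refl) auto
  finally show ?thesis
    using assms(1) by (simp add: sum_distrib_left mult.commute)
qed

text \<open>Instead of linear independence of the restrictions of the characters in R to B, we use
  y = (sum over rho of conj(rho(b0)) rho): |R|^2 = |y(b0)|^2 <= (sum over b of |y(b)|^2) = |R| |B|.\<close>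
lemma card_le_if_orthogonal:
  assumes B: "finite B" "B \<noteq> {}" and R: "finite R"
    and orth: "\<forall>\<rho>\<in>R. \<forall>\<rho>'\<in>R. \<rho> \<noteq> \<rho>' \<longrightarrow> ft_ind ms B (csub ms \<rho> \<rho>') = 0"
  shows "card R \<le> card B"
proof -
  obtain b0 where b0: "b0 \<in> B" using B by blast
  define y where "y b = (\<Sum>\<rho>\<in>R. cnj (cpair ms \<rho> b0) * cpair ms \<rho> b)" for b
  have "(\<Sum>b\<in>B. cpair ms \<rho> b * cnj (cpair ms \<rho>' b)) = (if \<rho>' = \<rho> then of_nat (card B) else 0)"
    if "\<rho> \<in> R" "\<rho>' \<in> R" for \<rho> \<rho>'
    using orth that by (auto simp: ft_ind_def cpair_csub cpair_mult_cnj)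
  from sum_mult_cnj_orthogonal[OF R this, where a = "\<lambda>\<rho>. cnj (cpair ms \<rho> b0)"]
  have "(\<Sum>b\<in>B. y b * cnj (y b)) = of_nat (card B) * (\<Sum>\<rho>\<in>R. cnj (cpair ms \<rho> b0) * cpair ms \<rho> b0)"
    unfolding y_def by simp
  then have "(\<Sum>b\<in>B. y b * cnj (y b)) = of_nat (card B * card R)"
    by (simp add: cpair_mult_cnj mult.commute)
  moreover have "(\<Sum>b\<in>B. y b * cnj (y b)) = of_real (\<Sum>b\<in>B. (cmod (y b))\<^sup>2)"
    by (simp only: of_real_sum complex_norm_square)
  ultimately have sum_norms: "(\<Sum>b\<in>B. (cmod (y b))\<^sup>2) = real (card B * card R)"
    by (metis of_real_eq_iff of_real_of_nat_eq)
  have "y b0 = of_nat (card R)"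
    unfolding y_def by (simp add: cpair_mult_cnj mult.commute)
  then have "(real (card R))\<^sup>2 \<le> (\<Sum>b\<in>B. (cmod (y b))\<^sup>2)"
    using member_le_sum[of b0 B "\<lambda>b. (cmod (y b))\<^sup>2"] B b0 by simp
  then have "real (card R) * real (card R) \<le> real (card B) * real (card R)"
    using sum_norms by (simp add: power2_eq_square)
  then show ?thesis
    by (cases "card R = 0") auto
qed

section \<open>The sets A_pi and A\<close>

definition perm_vec :: "(nat \<Rightarrow> nat) \<Rightarrow> int list" where
  "perm_vec \<sigma> = map (\<lambda>i. int (\<sigma> i + 1)) [0..<5]"

definition Api_hits :: "(nat \<Rightarrow> nat) \<Rightarrow> int list \<Rightarrow> nat" where
  "Api_hits \<sigma> \<gamma> = card {c\<in>{0..<6::int}. \<forall>i<5. (6::int) dvd (\<gamma>!i + c * perm_vec \<sigma> ! i)}"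

lemma Api_perm_vec: "Api \<sigma> = {x \<in> cgrp (replicate 5 6). (\<Sum>i<5. perm_vec \<sigma> ! i * x!i) mod 6 = 0}"
  unfolding Api_def perm_vec_def by simp

lemma length_Api: "x \<in> Api \<sigma> \<Longrightarrow> length x = 5"
  by (simp add: Api_def cgrp_def)

lemma zero_in_Api: "replicate 5 0 \<in> Api \<sigma>"
  by (auto simp: Api_def cgrp_def)

text \<open>Write the indicator of A_pi as (1/6) (sum over c in Z_6 of e(c <pi(v), x> / 6)) and sum
  characters over Z_6^5.\<close>
lemma ft_ind_Api: "ft_ind (replicate 5 6) (Api \<sigma>) \<gamma> = of_nat (6^4 * Api_hits \<sigma> \<gamma>)"
proof -
  let ?G = "cgrp (replicate 5 (6::int))"
  let ?s = "\<lambda>x. (\<Sum>i<5. perm_vec \<sigma> ! i * x!i)"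
  let ?\<eta> = "\<lambda>c. map (\<lambda>i. \<gamma>!i + c * perm_vec \<sigma> ! i) [0..<5]"
  have indicator: "(if ?s x mod 6 = 0 then 1 else 0)
      = (1/6) * (\<Sum>c\<in>{0..<6::int}. cis (2 * pi * of_int (?s x * c) / of_int 6))" for x
    using sum_roots_of_unity[of 6 "?s x"] by auto
  have shift: "cpair (replicate 5 6) \<gamma> x * cis (2 * pi * of_int (?s x * c) / of_int 6)
      = cpair (replicate 5 6) (?\<eta> c) x" for x c
  proof -
    have "(\<Sum>i<5. of_int (\<gamma>!i * x!i) / of_int 6) + of_int (?s x * c) / of_int 6
        = (\<Sum>i<5. of_int (?\<eta> c ! i * x!i) / (of_int 6 :: real))"
      by (simp add: sum_divide_distrib[symmetric] algebra_simps)
         (simp add: sum.distrib sum_distrib_left algebra_simps)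
    moreover have "cpair (replicate 5 6) \<gamma> x * cis (2 * pi * of_int (?s x * c) / of_int 6)
       = cis (2 * pi * ((\<Sum>i<5. of_int (\<gamma>!i * x!i) / of_int 6) + of_int (?s x * c) / of_int 6))"
      unfolding cpair_def by (simp add: cis_mult algebra_simps)
    ultimately show ?thesis
      unfolding cpair_def by simp
  qed
  have "ft_ind (replicate 5 6) (Api \<sigma>) \<gamma>
      = (\<Sum>x\<in>?G. cpair (replicate 5 6) \<gamma> x * (if ?s x mod 6 = 0 then 1 else 0))"
    unfolding ft_ind_def
    by (simp add: Api_perm_vec sum.inter_filter[OF finite_cgrp, symmetric] if_distrib cong: if_cong)
  also have "\<dots> = (1/6) * (\<Sum>c\<in>{0..<6::int}. \<Sum>x\<in>?G. cpair (replicate 5 6) (?\<eta> c) x)"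
    unfolding indicator shift[symmetric]
    by (simp add: sum_distrib_left sum_distrib_right sum.swap[of _ "{0..<6::int}"] mult.assoc)
  also have "\<dots> = (1/6) * (\<Sum>c\<in>{0..<6::int}.
      if \<forall>i<5. (6::int) dvd (\<gamma>!i + c * perm_vec \<sigma> ! i) then 6^5 else 0)"
    by (simp add: sum_cpair_cgrp_replicate del: of_int_numeral) (simp cong: if_cong)
  also have "\<dots> = of_nat (6^4 * Api_hits \<sigma> \<gamma>)"
    by (simp add: Api_hits_def sum.If_cases Int_def conj_commute)
  finally show ?thesis .
qed

lemma card_Api:
  assumes "\<sigma> permutes {0..<5}"
  shows "card (Api \<sigma>) = 6^4"
proof -
  obtain i0 where i0: "i0 < 5" "\<sigma> i0 = 0"
    using permutes_image[OF assms] by (metis atLeastLessThan_iff image_iff zero_less_numeral le0)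
  have "{c\<in>{0..<6::int}. \<forall>i<5. (6::int) dvd (replicate 5 0 ! i + c * perm_vec \<sigma> ! i)} = {0}"
  proof (rule set_eqI, rule iffI)
    fix c assume "c \<in> {c\<in>{0..<6::int}. \<forall>i<5. (6::int) dvd (replicate 5 0 ! i + c * perm_vec \<sigma> ! i)}"
    then have "0 \<le> c" "c < 6" "(6::int) dvd (c * perm_vec \<sigma> ! i0)" using i0 by auto
    moreover have "perm_vec \<sigma> ! i0 = 1" using i0 by (simp add: perm_vec_def)
    ultimately show "c \<in> {0}" by auto
  qed auto
  then have "Api_hits \<sigma> (replicate 5 0) = 1"
    by (simp add: Api_hits_def)
  moreover have "ft_ind (replicate 5 6) (Api \<sigma>) (replicate 5 0) = of_nat (card (Api \<sigma>))"
    by (simp add: ft_ind_def cpair_def)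
  ultimately show ?thesis
    using ft_ind_Api[of \<sigma> "replicate 5 0"] by (simp only: of_nat_eq_iff)
qed

definition layer_perm :: "(nat \<Rightarrow> nat \<Rightarrow> nat) \<Rightarrow> int \<Rightarrow> nat \<Rightarrow> nat" where
  "layer_perm enum k = enum (if k < 120 then nat k else 0)"

lemma layer_perm_permutes:
  "bij_betw enum {0..<120} {\<sigma>. \<sigma> permutes {0..<5}} \<Longrightarrow> layer_perm enum k permutes {0..<5}"
  unfolding layer_perm_def by (drule bij_betwE) auto

lemma ex_layer_perm:
  assumes "bij_betw enum {0..<120} {\<sigma>. \<sigma> permutes {0..<5}}" "\<sigma> permutes {0..<5}" "q \<ge> 120"
  shows "\<exists>k\<in>{0..<q}. layer_perm enum k = \<sigma>"
proof -
  have "\<sigma> \<in> enum ` {0..<120}"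
    using assms(2) bij_betw_imp_surj_on[OF assms(1)] by simp
  then obtain j where "j < 120" "enum j = \<sigma>"
    by auto
  then show ?thesis
    using assms(3) by (intro bexI[of _ "int j"]) (auto simp: layer_perm_def)
qed

lemma setA_eq_UN: "setA enum q = (\<Union>k\<in>{0..<q}. (\<lambda>x. x @ [k]) ` Api (layer_perm enum k))"
proof (rule set_eqI, rule iffI)
  fix a assume "a \<in> setA enum q"
  then obtain x k where "a = x @ [k]" "0 \<le> k" "k < q" "x \<in> Api (layer_perm enum k)"
    unfolding setA_def layer_perm_def by auto
  then show "a \<in> (\<Union>k\<in>{0..<q}. (\<lambda>x. x @ [k]) ` Api (layer_perm enum k))" by auto
next
  fix a assume "a \<in> (\<Union>k\<in>{0..<q}. (\<lambda>x. x @ [k]) ` Api (layer_perm enum k))"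
  then obtain x k where "a = x @ [k]" "0 \<le> k" "k < q" "x \<in> Api (layer_perm enum k)" by auto
  then show "a \<in> setA enum q" unfolding setA_def layer_perm_def by blast
qed

lemma length_setA: "a \<in> setA enum q \<Longrightarrow> length a = 6"
  unfolding setA_def Api_def cgrp_def by auto

lemma sum_setA:
  "(\<Sum>a\<in>setA enum q. f a) = (\<Sum>k\<in>{0..<q}. \<Sum>x\<in>Api (layer_perm enum k). f (x @ [k]))"
proof -
  have "finite (Api \<sigma>)" for \<sigma>
    unfolding Api_def by simp
  then have "(\<Sum>a\<in>setA enum q. f a) = (\<Sum>k\<in>{0..<q}. \<Sum>a\<in>(\<lambda>x. x @ [k]) ` Api (layer_perm enum k). f a)"
    unfolding setA_eq_UN by (intro sum.UNION_disjoint) auto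
  also have "\<dots> = (\<Sum>k\<in>{0..<q}. \<Sum>x\<in>Api (layer_perm enum k). f (x @ [k]))"
    by (rule sum.cong[OF refl], subst sum.reindex) (auto simp: inj_on_def)
  finally show ?thesis .
qed

lemma card_setA:
  assumes "bij_betw enum {0..<120} {\<sigma>. \<sigma> permutes {0..<5}}"
  shows "card (setA enum q) = nat q * 6^4"
  using sum_setA[of "\<lambda>_. 1::nat" enum q] card_Api[OF layer_perm_permutes[OF assms]] by simp

section \<open>Packings in Z_6^5\<close>

abbreviation Z6_5 :: "int list set" where "Z6_5 \<equiv> cgrp (replicate 5 6)"
abbreviation Z3_5 :: "int list set" where "Z3_5 \<equiv> cgrp (replicate 5 3)"

definition mod3 :: "int list \<Rightarrow> int list" where
  "mod3 g = map (\<lambda>z. z mod 3) g"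

definition shift3 :: "int list \<Rightarrow> int list \<Rightarrow> int list" where
  "shift3 y z = map (\<lambda>i. (y!i + z!i) mod 3) [0..<5]"

definition scale :: "int \<Rightarrow> int list \<Rightarrow> int list" where
  "scale t w = map (\<lambda>x. t * x) w"

definition translate :: "int list \<Rightarrow> int list \<Rightarrow> int \<Rightarrow> int list" where
  "translate w \<gamma> c = map (\<lambda>i. (\<gamma>!i + c * w!i) mod 6) [0..<5]"

text \<open>The translates of D by the cyclic subgroup of Z_6^5 generated by w are pairwise disjoint.\<close>
definition packing :: "int list set \<Rightarrow> int list \<Rightarrow> bool" where
  "packing D w \<longleftrightarrow> (\<forall>\<gamma>\<in>D. \<forall>\<gamma>'\<in>D. \<gamma> \<noteq> \<gamma>' \<longrightarrow>
      (\<forall>c\<in>{0..<6}. \<not> (\<forall>i<5. (6::int) dvd (\<gamma>!i - \<gamma>'!i + c * w!i))))"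

definition fibre_card :: "int list set \<Rightarrow> int list \<Rightarrow> nat" where
  "fibre_card D y = card {\<gamma>\<in>D. mod3 \<gamma> = y}"

definition line_card :: "int list set \<Rightarrow> int list \<Rightarrow> int list \<Rightarrow> nat" where
  "line_card D w y = fibre_card D (shift3 y (scale 0 w)) + fibre_card D (shift3 y (scale 1 w))
     + fibre_card D (shift3 y (scale 2 w))"

lemma mem_Z6_5: "g \<in> Z6_5 \<longleftrightarrow> length g = 5 \<and> (\<forall>i<5. 0 \<le> g!i \<and> g!i < 6)"
  by (simp add: cgrp_def)

lemma mem_Z3_5: "g \<in> Z3_5 \<longleftrightarrow> length g = 5 \<and> (\<forall>i<5. 0 \<le> g!i \<and> g!i < 3)"
  by (simp add: cgrp_def)

lemma card_Z3_5: "card Z3_5 = 243"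
  by (simp add: cgrp_replicate card_list_Pi)

lemma shift3_in_Z3_5: "shift3 y z \<in> Z3_5"
  by (simp add: mem_Z3_5 shift3_def)

lemma mod3_in_Z3_5: "g \<in> Z6_5 \<Longrightarrow> mod3 g \<in> Z3_5"
  by (simp add: mem_Z3_5 mem_Z6_5 mod3_def)

lemma shift3_cong: "(\<And>i. i < 5 \<Longrightarrow> z!i mod 3 = z'!i mod 3) \<Longrightarrow> shift3 y z = shift3 y z'"
  unfolding shift3_def by (intro map_cong refl) (metis atLeastLessThan_iff set_upt mod_add_right_eq)

lemma shift3_shift3: "length a = 5 \<Longrightarrow> shift3 (shift3 y a) b = shift3 y (map (\<lambda>i. a!i + b!i) [0..<5])"
  unfolding shift3_def by (auto simp: mod_add_left_eq add.assoc)

lemma shift3_shift3_cong: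
  "length a = 5 \<Longrightarrow> (\<And>i. i < 5 \<Longrightarrow> (a!i + b!i) mod 3 = c!i mod 3) \<Longrightarrow>
   shift3 (shift3 y a) b = shift3 y c"
  by (auto simp: shift3_shift3 intro!: shift3_cong)

lemma shift3_eq_self:
  assumes "y \<in> Z3_5" "\<And>i. i < 5 \<Longrightarrow> z!i mod 3 = 0"
  shows "shift3 y z = y"
proof (rule nth_equalityI)
  show "length (shift3 y z) = length y"
    using assms(1) by (simp add: shift3_def mem_Z3_5)
  fix i assume "i < length (shift3 y z)"
  then have i: "i < 5" by (simp add: shift3_def)
  have "(y!i + z!i) mod 3 = (y!i + z!i mod 3) mod 3" by (simp add: mod_add_right_eq)
  then show "shift3 y z ! i = y ! i"
    using assms i by (simp add: shift3_def mem_Z3_5)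
qed

lemma shift3_scale_0: "y \<in> Z3_5 \<Longrightarrow> length w = 5 \<Longrightarrow> shift3 y (scale 0 w) = y"
  by (rule shift3_eq_self) (auto simp: scale_def)

lemma scale_1 [simp]: "scale 1 w = w"
  by (simp add: scale_def)

lemma shift3_scale_scale:
  "length w = 5 \<Longrightarrow> shift3 (shift3 y (scale t w)) (scale c w) = shift3 y (scale ((t + c) mod 3) w)"
  by (rule shift3_shift3_cong) (auto simp: scale_def mod_mult_left_eq distrib_right)

lemma mod3_translate:
  assumes "length \<gamma> = 5" "length w = 5"
  shows "mod3 (translate w \<gamma> c) = shift3 (mod3 \<gamma>) (scale c w)"
proof (rule nth_equalityI)
  fix i assume "i < length (mod3 (translate w \<gamma> c))"
  then have "i < 5" by (simp add: mod3_def translate_def)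
  moreover have "((\<gamma>!i + c * w!i) mod 6) mod 3 = (\<gamma>!i mod 3 + c * w!i) mod 3"
    by (simp add: mod_mod_cancel mod_add_left_eq)
  ultimately show "mod3 (translate w \<gamma> c) ! i = shift3 (mod3 \<gamma>) (scale c w) ! i"
    using assms by (simp add: mod3_def translate_def shift3_def scale_def)
qed (simp add: mod3_def translate_def shift3_def)

lemma card_mod3_fibre:
  assumes "u \<in> Z3_5"
  shows "card {g\<in>Z6_5. mod3 g = u} = 32"
proof -
  have two: "card {x\<in>{0..<6::int}. x mod 3 = r} = 2" if "0 \<le> r" "r < 3" for r
  proof -
    have "{x\<in>{0..<6::int}. x mod 3 = r} = {r, r + 3}" using that by auto presburger+
    then show ?thesis by simp
  qed
  have "{g\<in>Z6_5. mod3 g = u} = list_Pi 5 (\<lambda>i. {x\<in>{0..<6::int}. x mod 3 = u!i})"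
    using assms unfolding mem_Z6_5 mem_Z3_5 list_Pi_def mod3_def
    by (auto intro!: nth_equalityI)
  also have "card \<dots> = (\<Prod>i<5. card {x\<in>{0..<6::int}. x mod 3 = u!i})"
    by (rule card_list_Pi) (rule finite_subset[of _ "{0..<6}"], auto)
  also have "\<dots> = (\<Prod>i<(5::nat). 2)"
    using assms two by (intro prod.cong) (auto simp: mem_Z3_5)
  finally show ?thesis by simp
qed

lemma card_filter_mod3:
  assumes "finite D" "finite U"
  shows "card {\<gamma>\<in>D. mod3 \<gamma> \<in> U} = (\<Sum>u\<in>U. fibre_card D u)"
proof -
  have "{\<gamma>\<in>D. mod3 \<gamma> \<in> U} = (\<Union>u\<in>U. {\<gamma>\<in>D. mod3 \<gamma> = u})" by auto
  also have "card \<dots> = (\<Sum>u\<in>U. card {\<gamma>\<in>D. mod3 \<gamma> = u})"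
    by (rule card_UN_disjoint) (use assms in auto)
  finally show ?thesis unfolding fibre_card_def .
qed

lemma sum_fibre_card: "D \<subseteq> Z6_5 \<Longrightarrow> (\<Sum>y\<in>Z3_5. fibre_card D y) = card D"
  using card_filter_mod3[of D Z3_5] mod3_in_Z3_5 finite_subset[of D Z6_5]
  by (simp add: subset_iff) (metis (mono_tags, lifting) Collect_cong Collect_mem_eq)

lemma sum_fibre_card_shift3:
  assumes "length z = 5"
  shows "(\<Sum>y\<in>Z3_5. fibre_card D (shift3 y z)) = (\<Sum>y\<in>Z3_5. fibre_card D y)"
proof (rule sum.reindex_bij_witness[where j = "\<lambda>y. shift3 y z" and i = "\<lambda>y. shift3 y (map uminus z)"])
  fix y assume "y \<in> Z3_5"
  then show "shift3 (shift3 y z) (map uminus z) = y" "shift3 (shift3 y (map uminus z)) z = y"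
    using assms by (simp_all add: shift3_shift3 shift3_eq_self)
qed (simp_all add: shift3_in_Z3_5)

lemma inj_on_translate:
  assumes "packing D w" "i0 < 5" "w!i0 = 1"
  shows "inj_on (\<lambda>(\<gamma>, c). translate w \<gamma> c) (D \<times> {0..<6})"
proof (rule inj_onI, clarify)
  fix \<gamma> c \<gamma>' c' assume mem: "\<gamma> \<in> D" "c \<in> {0..<6::int}" "\<gamma>' \<in> D" "c' \<in> {0..<6::int}"
    and eq: "translate w \<gamma> c = translate w \<gamma>' c'"
  define d where "d = (c - c') mod 6"
  have d: "d \<in> {0..<6}" by (simp add: d_def)
  have dvd: "6 dvd (\<gamma>!i - \<gamma>'!i + d * w!i)" if i: "i < 5" for i
  proof -
    have "(\<gamma>!i + c * w!i) mod 6 = (\<gamma>'!i + c' * w!i) mod 6"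
      using arg_cong[OF eq, of "\<lambda>l. l!i"] i by (simp add: translate_def)
    then have "6 dvd (\<gamma>!i + c * w!i) - (\<gamma>'!i + c' * w!i)" by (simp add: mod_eq_dvd_iff)
    moreover have "6 dvd ((c - c') - d) * w!i"
      unfolding d_def by (simp add: minus_mod_eq_mult_div[symmetric])
    moreover have "\<gamma>!i - \<gamma>'!i + d * w!i = ((\<gamma>!i + c * w!i) - (\<gamma>'!i + c' * w!i)) - ((c - c') - d) * w!i"
      by (simp add: algebra_simps)
    ultimately show ?thesis by (metis dvd_diff)
  qed
  then have "\<gamma> = \<gamma>'"
    using assms(1) mem d unfolding packing_def by blast
  moreover have "d = 0"
    using dvd[OF assms(2)] assms(3) \<open>\<gamma> = \<gamma>'\<close> d by auto
  then have "c = c'"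
    using mem(2,4) unfolding d_def by auto presburger
  ultimately show "\<gamma> = \<gamma>' \<and> c = c'" by simp
qed

lemma line_points_distinct:
  assumes "length w = 5" "i0 < 5" "w!i0 = 1" "y \<in> Z3_5"
  shows "shift3 y (scale 0 w) \<noteq> shift3 y (scale 1 w)" "shift3 y (scale 0 w) \<noteq> shift3 y (scale 2 w)"
    "shift3 y (scale 1 w) \<noteq> shift3 y (scale 2 w)"
proof -
  have i0: "shift3 y (scale t w) ! i0 = (y!i0 + t) mod 3" for t
    using assms by (simp add: shift3_def scale_def)
  have "0 \<le> y!i0" "y!i0 < 3" using assms by (auto simp: mem_Z3_5)
  then show "shift3 y (scale 0 w) \<noteq> shift3 y (scale 1 w)" "shift3 y (scale 0 w) \<noteq> shift3 y (scale 2 w)"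
    "shift3 y (scale 1 w) \<noteq> shift3 y (scale 2 w)"
    using i0[of 0] i0[of 1] i0[of 2] by (auto, presburger+)
qed

lemma card_mod3_preimage:
  assumes "U \<subseteq> Z3_5" "finite U"
  shows "card {g\<in>Z6_5. mod3 g \<in> U} = 32 * card U"
proof -
  have "card {g\<in>Z6_5. mod3 g \<in> U} = (\<Sum>u\<in>U. fibre_card Z6_5 u)"
    using assms(2) by (rule card_filter_mod3[rotated]) simp
  also have "\<dots> = (\<Sum>u\<in>U. 32)"
    using assms(1) by (intro sum.cong refl) (auto simp: fibre_card_def card_mod3_fibre)
  finally show ?thesis by simp
qed

text \<open>Translation by the subgroup generated by w maps (D restricted to the three fibres over a
  line in direction w mod 3) \<times> Z_6 injectively into the 3 * 32 points of Z_6^5 over that line.\<close>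
lemma line_card_le_16:
  assumes D: "D \<subseteq> Z6_5" and w: "length w = 5" "i0 < 5" "w!i0 = 1"
    and packing: "packing D w" and y: "y \<in> Z3_5"
  shows "line_card D w y \<le> 16"
proof -
  define u where "u t = shift3 y (scale t w)" for t
  define U where "U = {u 0, u 1, u 2}"
  define E where "E = {\<gamma>\<in>D. mod3 \<gamma> \<in> U}"
  note distinct = line_points_distinct[OF w y, folded u_def]
  have "finite D" using D by (rule finite_subset) simp
  then have "card E = (\<Sum>u\<in>U. fibre_card D u)"
    unfolding E_def by (rule card_filter_mod3) (simp add: U_def)
  then have line_card_E: "line_card D w y = card E"
    using distinct by (simp add: U_def u_def line_card_def)
  have card_T: "card {g\<in>Z6_5. mod3 g \<in> U} = 96"
    using distinct card_mod3_preimage[of U] by (simp add: U_def u_def shift3_in_Z3_5)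
  have "translate w \<gamma> c \<in> Z6_5 \<and> mod3 (translate w \<gamma> c) \<in> U" if \<gamma>: "\<gamma> \<in> E" for \<gamma> c
  proof -
    obtain t where t: "t \<in> {0, 1, 2}" "mod3 \<gamma> = u t"
      using \<gamma> by (auto simp: E_def U_def)
    have "length \<gamma> = 5"
      using D \<gamma> by (auto simp: E_def mem_Z6_5 subset_iff)
    then have "mod3 (translate w \<gamma> c) = u ((t + c) mod 3)"
      using t(2) by (simp add: mod3_translate w(1) u_def shift3_scale_scale)
    moreover have "(t + c) mod 3 \<in> {0, 1, 2}" by auto
    ultimately show ?thesis
      by (auto simp: U_def mem_Z6_5 translate_def)
  qed
  then have image: "(\<lambda>(\<gamma>, c). translate w \<gamma> c) ` (E \<times> {0..<6}) \<subseteq> {g\<in>Z6_5. mod3 g \<in> U}"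
    by auto
  have "inj_on (\<lambda>(\<gamma>, c). translate w \<gamma> c) (E \<times> {0..<6})"
    using inj_on_translate[OF packing w(2,3)] by (rule inj_on_subset) (auto simp: E_def)
  then have "card (E \<times> {0..<6::int}) \<le> 96"
    using card_inj_on_le[OF _ image] card_T by simp
  then show ?thesis
    using line_card_E by (simp add: card_cartesian_product)
qed

text \<open>Summing line_card over Z_3^5 counts D three times, and 3 * 6^4 = 16 * 3^5.\<close>
lemma line_card_eq_16:
  assumes D: "D \<subseteq> Z6_5" and card_D: "card D \<ge> 6^4" and w: "length w = 5" "i0 < 5" "w!i0 = 1"
    and packing: "packing D w" and y: "y \<in> Z3_5"
  shows "line_card D w y = 16"
proof (rule ccontr)
  have le: "\<forall>y\<in>Z3_5. line_card D w y \<le> 16"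
    using line_card_le_16[OF D w packing] by blast
  assume "line_card D w y \<noteq> 16"
  with le y have "line_card D w y < 16" by fastforce
  with le y have "(\<Sum>y\<in>Z3_5. line_card D w y) < (\<Sum>y\<in>Z3_5. 16)"
    by (intro sum_strict_mono_ex1) auto
  moreover have "(\<Sum>y\<in>Z3_5. line_card D w y) = 3 * card D"
    using w(1) unfolding line_card_def sum.distrib
    by (simp add: sum_fibre_card_shift3 scale_def sum_fibre_card[OF D])
  ultimately show False
    using card_D card_Z3_5 by simp
qed

lemma packing_if_Api_hits_eq_0:
  assumes "\<forall>\<gamma>\<in>D. \<forall>\<gamma>'\<in>D. \<gamma> \<noteq> \<gamma>' \<longrightarrow> Api_hits \<sigma> (csub (replicate 5 6) \<gamma> \<gamma>') = 0"
  shows "packing D (perm_vec \<sigma>)"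
  unfolding packing_def
proof (intro ballI impI notI)
  fix \<gamma> \<gamma>' c assume mem: "\<gamma> \<in> D" "\<gamma>' \<in> D" "\<gamma> \<noteq> \<gamma>'" and c: "c \<in> {0..<6::int}"
    and dvd: "\<forall>i<5. 6 dvd \<gamma>!i - \<gamma>'!i + c * perm_vec \<sigma> ! i"
  let ?\<delta> = "csub (replicate 5 6) \<gamma> \<gamma>'"
  have "(6::int) dvd (?\<delta>!i + c * perm_vec \<sigma> ! i)" if i: "i < 5" for i
  proof -
    have "(?\<delta>!i + c * perm_vec \<sigma> ! i) mod 6 = (\<gamma>!i - \<gamma>'!i + c * perm_vec \<sigma> ! i) mod 6"
      using i by (simp add: csub_def mod_add_left_eq)
    then show ?thesis using dvd i by (simp add: dvd_eq_mod_eq_0)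
  qed
  then have "c \<in> {c\<in>{0..<6::int}. \<forall>i<5. (6::int) dvd (?\<delta>!i + c * perm_vec \<sigma> ! i)}"
    using c by simp
  moreover have "finite {c\<in>{0..<6::int}. \<forall>i<5. (6::int) dvd (?\<delta>!i + c * perm_vec \<sigma> ! i)}"
    by (rule finite_subset[of _ "{0..<6}"]) auto
  ultimately have "Api_hits \<sigma> ?\<delta> > 0"
    unfolding Api_hits_def by (subst card_gt_0_iff) blast
  then show False using bspec[OF bspec[OF assms mem(1)] mem(2)] mem(3) by simp
qed

lemma less_5_cases: "(i::nat) < 5 \<Longrightarrow> i = 0 \<or> i = 1 \<or> i = 2 \<or> i = 3 \<or> i = 4"
  by arith

lemma shift3_scale_scale_cong:
  assumes "length a = 5" "length b = 5" "length c = 5"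
    and "\<And>i. i < 5 \<Longrightarrow> (s * a!i + t * b!i) mod 3 = (u * c!i) mod 3"
  shows "shift3 (shift3 y (scale s a)) (scale t b) = shift3 y (scale u c)"
  using assms by (auto simp: scale_def intro!: shift3_shift3_cong)

text \<open>The lines in direction f through y, y + g, y + 2g cover the same points, with multiplicity,
  as the lines through y in directions f, g, h, except that y + k and y + k' replace y twice.\<close>
lemma fibre_card_midpoint:
  assumes lengths: "length f = 5" "length g = 5" "length h = 5" "length k = 5" "length k' = 5"
    and Lf: "\<forall>y\<in>Z3_5. line_card D f y = 16" and Lg: "\<forall>y\<in>Z3_5. line_card D g y = 16"
    and Lh: "\<forall>y\<in>Z3_5. line_card D h y = 16"
    and h: "\<And>i. i < 5 \<Longrightarrow> (f!i + g!i) mod 3 = h!i mod 3"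
    and k: "\<And>i. i < 5 \<Longrightarrow> (2 * g!i + f!i) mod 3 = k!i mod 3"
    and k': "\<And>i. i < 5 \<Longrightarrow> (g!i + 2 * f!i) mod 3 = k'!i mod 3"
    and y: "y \<in> Z3_5"
  shows "2 * fibre_card D y = fibre_card D (shift3 y k) + fibre_card D (shift3 y k')"
proof -
  define y1 where "y1 = shift3 y (scale 1 g)"
  define y2 where "y2 = shift3 y (scale 2 g)"
  have y12: "y1 \<in> Z3_5" "y2 \<in> Z3_5" by (simp_all add: y1_def y2_def shift3_in_Z3_5)
  have e1: "shift3 y1 (scale 1 f) = shift3 y (scale 1 h)"
    unfolding y1_def by (rule shift3_scale_scale_cong) (use lengths h in \<open>auto simp: add.commute\<close>)
  have e2: "shift3 y1 (scale 2 f) = shift3 y (scale 1 k')"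
    unfolding y1_def by (rule shift3_scale_scale_cong) (use lengths k' in auto)
  have e3: "shift3 y2 (scale 1 f) = shift3 y (scale 1 k)"
    unfolding y2_def by (rule shift3_scale_scale_cong) (use lengths k in auto)
  have e4: "shift3 y2 (scale 2 f) = shift3 y (scale 2 h)"
  proof -
    have "(2 * g!i + 2 * f!i) mod 3 = (2 * h!i) mod 3" if "i < 5" for i
    proof -
      have "(2 * g!i + 2 * f!i) mod 3 = (2 * ((f!i + g!i) mod 3)) mod 3"
        by (simp add: mod_mult_right_eq algebra_simps)
      also have "\<dots> = (2 * h!i) mod 3" using h[OF that] by (simp add: mod_mult_right_eq)
      finally show ?thesis .
    qed
    then show ?thesis
      unfolding y2_def by (intro shift3_scale_scale_cong) (use lengths in auto)
  qed
  have "line_card D f y1 + line_card D f y2 + line_card D f y = line_card D f y + line_card D g y + line_card D h y"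
    using Lf Lg Lh y y12 by simp
  then show ?thesis
    unfolding line_card_def shift3_scale_0[OF y lengths(1)] shift3_scale_0[OF y lengths(2)]
      shift3_scale_0[OF y lengths(3)] shift3_scale_0[OF y12(1) lengths(1)]
      shift3_scale_0[OF y12(2) lengths(1)] e1 e2 e3 e4
    unfolding y1_def y2_def scale_1 by simp
qed

text \<open>Here k' = 2k, so the relation at y and at y + k gives 3 (m(y + k) - m(y)) = 0.\<close>
lemma fibre_card_shift3_invariant:
  assumes lengths: "length k = 5" "length k' = 5"
    and midpoint: "\<forall>y\<in>Z3_5. 2 * fibre_card D y = fibre_card D (shift3 y k) + fibre_card D (shift3 y k')"
    and k': "\<And>i. i < 5 \<Longrightarrow> (2 * k!i) mod 3 = k'!i mod 3"
    and y: "y \<in> Z3_5"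
  shows "fibre_card D (shift3 y k) = fibre_card D y"
proof -
  have a: "shift3 (shift3 y k) k = shift3 y k'"
    using shift3_scale_scale_cong[of k k k' 1 1 1 y] lengths k' by simp
  have b: "shift3 (shift3 y k) k' = y"
  proof -
    have "shift3 (shift3 y k) k' = shift3 y (map (\<lambda>i. k!i + k'!i) [0..<5])"
      using lengths by (simp add: shift3_shift3)
    also have "\<dots> = y"
    proof (rule shift3_eq_self[OF y])
      fix i :: nat assume i: "i < 5"
      have "(k!i + k'!i) mod 3 = (k!i + (2 * k!i) mod 3) mod 3"
        using k'[OF i] by (simp add: mod_add_right_eq)
      also have "\<dots> = (3 * k!i) mod 3" by (simp add: mod_add_right_eq)
      finally show "map (\<lambda>i. k!i + k'!i) [0..<5] ! i mod 3 = 0" using i by simp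
    qed
    finally show ?thesis .
  qed
  have "2 * fibre_card D (shift3 y k) = fibre_card D (shift3 y k') + fibre_card D y"
    using midpoint shift3_in_Z3_5[of y k] a b by metis
  moreover have "2 * fibre_card D y = fibre_card D (shift3 y k) + fibre_card D (shift3 y k')"
    using midpoint y by blast
  ultimately show ?thesis by simp
qed

lemma fibre_card_shift3_eq_if_lines:
  assumes lengths: "length f = 5" "length g = 5" "length h = 5" "length k = 5"
    and Lf: "\<forall>y\<in>Z3_5. line_card D f y = 16" and Lg: "\<forall>y\<in>Z3_5. line_card D g y = 16"
    and Lh: "\<forall>y\<in>Z3_5. line_card D h y = 16"
    and h: "\<And>i. i < 5 \<Longrightarrow> (f!i + g!i) mod 3 = h!i mod 3"
    and k: "\<And>i. i < 5 \<Longrightarrow> (2 * g!i + f!i) mod 3 = k!i mod 3"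
    and y: "y \<in> Z3_5"
  shows "fibre_card D (shift3 y k) = fibre_card D y"
proof -
  define k' where "k' = map (\<lambda>i. g!i + 2 * f!i) [0..<5]"
  have "2 * fibre_card D y = fibre_card D (shift3 y k) + fibre_card D (shift3 y k')"
    if "y \<in> Z3_5" for y
    by (rule fibre_card_midpoint[OF lengths _ Lf Lg Lh h k _ that]) (simp_all add: k'_def)
  moreover have "(2 * k!i) mod 3 = k'!i mod 3" if i: "i < 5" for i
  proof -
    have "(2 * k!i) mod 3 = (2 * (2 * g!i + f!i)) mod 3"
      using k[OF i] by (metis mod_mult_right_eq)
    also have "2 * (2 * g!i + f!i) = (g!i + 2 * f!i) + 3 * g!i" by simp
    also have "((g!i + 2 * f!i) + 3 * g!i) mod 3 = (g!i + 2 * f!i) mod 3" by presburger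
    finally show ?thesis using i by (simp add: k'_def)
  qed
  ultimately show ?thesis
    using lengths(4) y by (intro fibre_card_shift3_invariant[where k' = k']) (simp_all add: k'_def)
qed

lemma permutes_of_list:
  assumes "length L = 5" "distinct L" "set L = {0..<5}"
  shows "(\<lambda>i. if i < 5 then L!i else i) permutes {0..<5}"
proof (rule bij_imp_permutes)
  have "(\<lambda>i. if i < 5 then L!i else i) ` {0..<5} = set L"
    using assms(1) by (auto simp: set_conv_nth image_iff)
  then show "bij_betw (\<lambda>i. if i < 5 then L!i else i) {0..<5} {0..<5}"
    using assms by (auto simp: bij_betw_def inj_on_def nth_eq_iff_index_eq)
qed auto

lemma packing_of_list:
  assumes packing: "\<And>\<sigma>. \<sigma> permutes {0..<5} \<Longrightarrow> packing D (perm_vec \<sigma>)"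
    and L: "length L = 5" "distinct L" "set L = {0..<5}"
  shows "packing D (map (\<lambda>x. int x + 1) L)"
proof -
  have "perm_vec (\<lambda>i. if i < 5 then L!i else i) = map (\<lambda>x. int x + 1) L"
    using L(1) by (auto simp: perm_vec_def intro!: nth_equalityI)
  then show ?thesis
    using packing[OF permutes_of_list[OF L]] by simp
qed

lemma line_card_of_list_eq_16:
  assumes D: "D \<subseteq> Z6_5" and card_D: "card D \<ge> 6^4"
    and packing: "\<And>\<sigma>. \<sigma> permutes {0..<5} \<Longrightarrow> packing D (perm_vec \<sigma>)"
    and L: "length L = 5" "distinct L" "set L = {0..<5}" and i0: "i0 < 5" "L!i0 = 0"
  shows "\<forall>y\<in>Z3_5. line_card D (map (\<lambda>x. int x + 1) L) y = 16"
  using line_card_eq_16[OF D card_D _ _ _ packing_of_list[OF packing L]] L i0 by simp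

text \<open>Since [1,3,4,2,5] = [2,0,2,2,0] + [2,0,2,0,2] mod 3, the two invariances carry y to the
  other two points of the line through y in direction [1,3,4,2,5].\<close>
lemma line_card_eq_3_fibre_card:
  assumes inv1: "\<forall>y\<in>Z3_5. fibre_card D (shift3 y [2,0,2,2,0]) = fibre_card D y"
    and inv2: "\<forall>y\<in>Z3_5. fibre_card D (shift3 y [2,0,2,0,2]) = fibre_card D y"
    and y: "y \<in> Z3_5"
  shows "line_card D [1,3,4,2,5] y = 3 * fibre_card D y"
proof -
  define a where "a = shift3 y [1,3,4,2,5]"
  define b where "b = shift3 y (scale 2 [1,3,4,2,5])"
  have a: "shift3 (shift3 y [2,0,2,2,0]) [2,0,2,0,2] = a"
    unfolding a_def by (rule shift3_shift3_cong) (auto dest!: less_5_cases)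
  have b: "shift3 (shift3 a [2,0,2,2,0]) [2,0,2,0,2] = b"
    unfolding a_def b_def
    by (subst shift3_shift3_cong[where c = "[3,3,6,4,5]"], simp, fastforce dest!: less_5_cases,
        rule shift3_shift3_cong) (auto dest!: less_5_cases simp: scale_def)
  have "fibre_card D a = fibre_card D y"
    using inv1 inv2 y shift3_in_Z3_5 a by metis
  moreover have "fibre_card D b = fibre_card D a"
    using inv1 inv2 shift3_in_Z3_5 b unfolding a_def by metis
  moreover have "line_card D [1,3,4,2,5] y = fibre_card D y + fibre_card D a + fibre_card D b"
    unfolding line_card_def a_def b_def scale_1 using shift3_scale_0[OF y, of "[1,3,4,2,5]"] by simp
  ultimately show ?thesis by simp
qed

text \<open>With f = [3,1,4,2,5], fibre_card is invariant under 2g + f for the two choices of g, h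
  below; these directions add up to [1,3,4,2,5] mod 3. So the three fibres on every line in
  direction [1,3,4,2,5] are equal, yet they add up to 16.\<close>
theorem card_lt_if_packing:
  assumes D: "D \<subseteq> Z6_5" and packing: "\<And>\<sigma>. \<sigma> permutes {0..<5} \<Longrightarrow> packing D (perm_vec \<sigma>)"
  shows "card D < 6^4"
proof (rule ccontr)
  assume "\<not> card D < 6^4"
  then have lines: "\<forall>y\<in>Z3_5. line_card D (map (\<lambda>x. int x + 1) L) y = 16"
    if "length L = 5" "distinct L" "set L = {0..<5}" "i0 < 5" "L!i0 = 0" for L i0
    using line_card_of_list_eq_16[OF D _ packing that] by simp
  have Lf: "\<forall>y\<in>Z3_5. line_card D [3,1,4,2,5] y = 16"
    using lines[of "[2,0,3,1,4]" 1] by (simp add: atLeastLessThan_nat_numeral insert_commute)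
  have Lg1: "\<forall>y\<in>Z3_5. line_card D [1,4,2,3,5] y = 16"
    using lines[of "[0,3,1,2,4]" 0] by (simp add: atLeastLessThan_nat_numeral insert_commute)
  have Lh1: "\<forall>y\<in>Z3_5. line_card D [1,2,3,5,4] y = 16"
    using lines[of "[0,1,2,4,3]" 0] by (simp add: atLeastLessThan_nat_numeral insert_commute)
  have Lg2: "\<forall>y\<in>Z3_5. line_card D [1,4,2,5,3] y = 16"
    using lines[of "[0,3,1,4,2]" 0] by (simp add: atLeastLessThan_nat_numeral insert_commute)
  have Lh2: "\<forall>y\<in>Z3_5. line_card D [1,2,3,4,5] y = 16"
    using lines[of "[0,1,2,3,4]" 0] by (simp add: atLeastLessThan_nat_numeral insert_commute)
  have Le: "\<forall>y\<in>Z3_5. line_card D [1,3,4,2,5] y = 16"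
    using lines[of "[0,2,3,1,4]" 0] by (simp add: atLeastLessThan_nat_numeral insert_commute)
  have "\<forall>y\<in>Z3_5. fibre_card D (shift3 y [2,0,2,2,0]) = fibre_card D y"
    by (intro ballI fibre_card_shift3_eq_if_lines[OF _ _ _ _ Lf Lg1 Lh1]) (auto dest!: less_5_cases)
  moreover have "\<forall>y\<in>Z3_5. fibre_card D (shift3 y [2,0,2,0,2]) = fibre_card D y"
    by (intro ballI fibre_card_shift3_eq_if_lines[OF _ _ _ _ Lf Lg2 Lh2]) (auto dest!: less_5_cases)
  moreover have "replicate 5 0 \<in> Z3_5" by (simp add: mem_Z3_5)
  ultimately have "3 * fibre_card D (replicate 5 0) = 16"
    using line_card_eq_3_fibre_card Le by metis
  then show False by presburger
qed

section \<open>The Fourier transform of P_t\<close>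

lemma length_msH [simp]: "length (msH p) = 4"
  and length_msG [simp]: "length (msG q) = 6"
  and length_msGH [simp]: "length (msGH q p) = 10"
  by (simp_all add: msH_def msG_def msGH_def)

lemma msGH_eq: "msGH q p = [6,6,6,6,6,q,p,p,p,p]"
  by (simp add: msGH_def msG_def msH_def numeral_eq_Suc)

lemma less_10_cases:
  "(i::nat) < 10 \<Longrightarrow> i = 0 \<or> i = 1 \<or> i = 2 \<or> i = 3 \<or> i = 4 \<or> i = 5 \<or> i = 6 \<or> i = 7 \<or> i = 8 \<or> i = 9"
  by arith

lemma nth_msGH: "i < 10 \<Longrightarrow> msGH q p ! i = (if i < 5 then 6 else if i = 5 then q else p)"
  unfolding msGH_eq by (elim less_10_cases[elim_format]) auto

lemma list_10_split:
  assumes "length s = 10"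
  shows "s = take 5 s @ s!5 # drop 6 s"
proof -
  have "drop 5 s = s!5 # drop 6 s" using assms Cons_nth_drop_Suc[of 5 s] by simp
  then show ?thesis by (metis append_take_drop_id)
qed

lemma mem_cgrp_msGH:
  assumes "s \<in> cgrp (msGH q p)"
  shows "length s = 10" "take 5 s \<in> Z6_5" "0 \<le> s!5 \<and> s!5 < q" "drop 6 s \<in> cgrp (msH p)"
proof -
  have l: "length s = 10" and h: "\<And>i. i < 10 \<Longrightarrow> 0 \<le> s!i \<and> s!i < msGH q p ! i"
    using assms by (auto simp: cgrp_def)
  show "length s = 10" by (fact l)
  have "0 \<le> s!i \<and> s!i < 6" if "i < 5" for i
    using h[of i] nth_msGH[of i] that by simp
  then show "take 5 s \<in> Z6_5" using l by (auto simp: mem_Z6_5)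
  show "0 \<le> s!5 \<and> s!5 < q" using h[of 5] nth_msGH[of 5] by simp
  have "0 \<le> s!(6+i) \<and> s!(6+i) < p" if "i < 4" for i
    using h[of "6+i"] nth_msGH[of "6+i"] that by simp
  then show "drop 6 s \<in> cgrp (msH p)" using l by (auto simp: cgrp_def msH_def)
qed

lemma csub_msGH_same_layer:
  assumes "length s = 10" "length s' = 10" "s!5 = s'!5"
  shows "csub (msGH q p) s s'
    = (csub (replicate 5 6) (take 5 s) (take 5 s') @ [0]) @ csub (msH p) (drop 6 s) (drop 6 s')"
proof (rule nth_equalityI)
  fix i assume "i < length (csub (msGH q p) s s')"
  then have "i < 10" by (simp add: csub_def)
  then show "csub (msGH q p) s s' ! i
    = ((csub (replicate 5 6) (take 5 s) (take 5 s') @ [0]) @ csub (msH p) (drop 6 s) (drop 6 s')) ! i"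
    using assms by (elim less_10_cases[elim_format])
      (auto simp: csub_def msGH_eq msH_def nth_append numeral_eq_Suc)
qed (simp add: csub_def)

lemma Pt_eq_image: "Pt p A t B = (\<lambda>(a, b). a @ cadd (msH p) (t a) b) ` (A \<times> B)"
  unfolding Pt_def by auto

lemma inj_on_Pt:
  assumes "\<forall>a\<in>A. length a = 6" "B \<subseteq> cgrp (msH p)"
  shows "inj_on (\<lambda>(a, b). a @ cadd (msH p) (t a) b) (A \<times> B)"
proof (rule inj_onI, clarify)
  fix a b a' b' assume mem: "a \<in> A" "b \<in> B" "a' \<in> A" "b' \<in> B"
    and eq: "a @ cadd (msH p) (t a) b = a' @ cadd (msH p) (t a') b'"
  then have "a = a'" using assms(1) by (metis append_eq_append_conv)
  moreover from this have "b = b'"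
    using eq assms(2) mem by (intro cadd_left_inj[of b "msH p" b' "t a"]) auto
  ultimately show "a = a' \<and> b = b'" by simp
qed

lemma card_Pt:
  assumes "\<forall>a\<in>A. length a = 6" "B \<subseteq> cgrp (msH p)"
  shows "card (Pt p A t B) = card A * card B"
  unfolding Pt_eq_image by (simp add: card_image[OF inj_on_Pt[OF assms]] card_cartesian_product)

lemma ft_ind_Pt:
  assumes A: "\<forall>a\<in>A. length a = 6" and B: "B \<subseteq> cgrp (msH p)"
    and t: "\<forall>a\<in>A. length (t a) = 4" and dG: "length dG = 6"
  shows "ft_ind (msGH q p) (Pt p A t B) (dG @ dH)
     = (\<Sum>a\<in>A. cpair (msG q) dG a * cpair (msH p) dH (t a)) * ft_ind (msH p) B dH"
proof -
  have "ft_ind (msGH q p) (Pt p A t B) (dG @ dH)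
      = (\<Sum>(a, b)\<in>A \<times> B. cpair (msGH q p) (dG @ dH) (a @ cadd (msH p) (t a) b))"
    unfolding ft_ind_def Pt_eq_image sum.reindex[OF inj_on_Pt[OF A B]] by (simp add: case_prod_unfold)
  also have "\<dots> = (\<Sum>(a, b)\<in>A \<times> B. (cpair (msG q) dG a * cpair (msH p) dH (t a)) * cpair (msH p) dH b)"
    using A dG unfolding msGH_def
    by (intro sum.cong refl) (auto simp: cpair_append cpair_cadd mult.assoc)
  also have "\<dots> = (\<Sum>a\<in>A. cpair (msG q) dG a * cpair (msH p) dH (t a)) * ft_ind (msH p) B dH"
    unfolding ft_ind_def by (simp add: sum_product sum.cartesian_product)
  finally show ?thesis .
qed

definition twisted_ft ::
    "(nat \<Rightarrow> nat \<Rightarrow> nat) \<Rightarrow> int \<Rightarrow> (nat \<Rightarrow> int list) \<Rightarrow> int \<Rightarrow> int list \<Rightarrow> int list \<Rightarrow> complex"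
  where "twisted_ft enum q v p \<gamma> \<rho> =
    (\<Sum>a\<in>setA enum q. cpair (msG q) (\<gamma> @ [0]) a * cpair (msH p) \<rho> (tmap v a))"

lemma tmap_append:
  "length x = 5 \<Longrightarrow>
   tmap v (x @ [k]) = (if x = replicate 5 0 \<and> 1 \<le> k \<and> k \<le> 4 then v (nat k) else replicate 4 0)"
  by (simp add: tmap_def nth_append)

lemma length_tmap:
  assumes "basisH p v"
  shows "length (tmap v a) = 4"
proof (cases "take 5 a = replicate 5 0 \<and> 1 \<le> a!5 \<and> a!5 \<le> 4")
  case True
  then have "nat (a!5) \<in> {1..4}" by auto
  then have "v (nat (a!5)) \<in> cgrp (msH p)" using assms unfolding basisH_def by blast
  then show ?thesis using True by (simp add: tmap_def cgrp_def)
next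
  case False
  then show ?thesis unfolding tmap_def by (subst if_not_P[OF False]) simp
qed

text \<open>The map t moves only the points (0, k) with 1 \<le> k \<le> 4, each by v_k.\<close>
lemma sum_Api_twisted:
  assumes "length \<gamma> = 5"
  shows "(\<Sum>x\<in>Api \<sigma>. cpair (msG q) (\<gamma> @ [0]) (x @ [k]) * cpair (msH p) \<rho> (tmap v (x @ [k])))
     = of_nat (6^4 * Api_hits \<sigma> \<gamma>) + (if 1 \<le> k \<and> k \<le> 4 then cpair (msH p) \<rho> (v (nat k)) - 1 else 0)"
proof -
  let ?z = "replicate 5 (0::int)"
  let ?\<chi> = "cpair (replicate 5 6) \<gamma>"
  have G: "cpair (msG q) (\<gamma> @ [0]) (x @ [k]) = ?\<chi> x" if "x \<in> Api \<sigma>" for x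
    using length_Api[OF that] assms cpair_append[of \<gamma> "replicate 5 6" x "[q]" "[0]" "[k]"]
    by (simp add: msG_def cpair_def)
  have H: "cpair (msH p) \<rho> (tmap v (x @ [k]))
      = (if x = ?z \<and> 1 \<le> k \<and> k \<le> 4 then cpair (msH p) \<rho> (v (nat k)) else 1)" if "x \<in> Api \<sigma>" for x
    using length_Api[OF that] by (auto simp: tmap_append intro: cpair_eq_1)
  have "(\<Sum>x\<in>Api \<sigma>. cpair (msG q) (\<gamma> @ [0]) (x @ [k]) * cpair (msH p) \<rho> (tmap v (x @ [k])))
      = (\<Sum>x\<in>Api \<sigma>. ?\<chi> x + (if x = ?z then
            (if 1 \<le> k \<and> k \<le> 4 then ?\<chi> x * (cpair (msH p) \<rho> (v (nat k)) - 1) else 0) else 0))"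
    by (intro sum.cong refl) (auto simp: G H algebra_simps)
  also have "\<dots> = ft_ind (replicate 5 6) (Api \<sigma>) \<gamma>
      + (if 1 \<le> k \<and> k \<le> 4 then ?\<chi> ?z * (cpair (msH p) \<rho> (v (nat k)) - 1) else 0)"
    using zero_in_Api by (simp add: sum.distrib ft_ind_def Api_def)
  also have "?\<chi> ?z = 1" by (rule cpair_eq_1) simp
  finally show ?thesis by (simp add: ft_ind_Api)
qed

lemma twisted_ft_eq:
  assumes "length \<gamma> = 5" "q > 4"
  shows "twisted_ft enum q v p \<gamma> \<rho> = of_nat (\<Sum>k\<in>{0..<q}. 6^4 * Api_hits (layer_perm enum k) \<gamma>)
           + (\<Sum>k\<in>{1..4::int}. cpair (msH p) \<rho> (v (nat k)) - 1)"
proof -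
  have "{k\<in>{0..<q}. 1 \<le> k \<and> k \<le> 4} = {1..4}" using assms(2) by auto
  then have "(\<Sum>k\<in>{0..<q}. if 1 \<le> k \<and> k \<le> 4 then cpair (msH p) \<rho> (v (nat k)) - 1 else 0)
      = (\<Sum>k\<in>{1..4::int}. cpair (msH p) \<rho> (v (nat k)) - 1)"
    by (simp add: sum.inter_filter[symmetric])
  then show ?thesis
    unfolding twisted_ft_def sum_setA sum_Api_twisted[OF assms(1)] by (simp add: sum.distrib)
qed

lemma cpair_msH_eq_1_iff:
  assumes "p > 0"
  shows "cpair (msH p) \<rho> x = 1 \<longleftrightarrow> p dvd (\<Sum>i<4. \<rho>!i * x!i)"
proof -
  have "(\<Sum>i<length (msH p). of_int (\<rho>!i * x!i) / of_int (msH p ! i))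
      = (of_int (\<Sum>i<4. \<rho>!i * x!i) / of_int p :: real)"
    by (simp add: msH_def sum_divide_distrib)
  then have "cpair (msH p) \<rho> x = cis (2 * pi * of_int (\<Sum>i<4. \<rho>!i * x!i) / of_int p)"
    unfolding cpair_def by simp
  then show ?thesis by (simp only: cis_2pi_div_eq_1_iff[OF assms])
qed

lemma dvd_sum_lincombH:
  assumes "\<forall>j\<in>{1..4}. p dvd (\<Sum>i<4. \<rho>!i * v j ! i)"
  shows "p dvd (\<Sum>i<4. \<rho>!i * lincombH p v c ! i)"
proof -
  define X where "X i = (\<Sum>j\<in>{1..4}. c j * v j ! i)" for i
  have "(\<Sum>i<4. \<rho>!i * X i) = (\<Sum>j\<in>{1..4}. c j * (\<Sum>i<4. \<rho>!i * v j ! i))"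
    unfolding X_def by (simp add: sum_distrib_left algebra_simps) (rule sum.swap)
  moreover have "p dvd (\<Sum>j\<in>{1..4}. c j * (\<Sum>i<4. \<rho>!i * v j ! i))"
    by (rule dvd_sum, rule dvd_mult) (use assms in auto)
  ultimately have "p dvd (\<Sum>i<4. \<rho>!i * X i)"
    by simp
  moreover have "p dvd (\<Sum>i<4. \<rho>!i * (X i mod p - X i))"
    by (intro dvd_sum dvd_mult) (simp add: mod_eq_dvd_iff[symmetric] mod_mod_trivial)
  ultimately have "p dvd (\<Sum>i<4. \<rho>!i * X i) + (\<Sum>i<4. \<rho>!i * (X i mod p - X i))"
    by (rule dvd_add)
  then show ?thesis
    by (simp add: lincombH_def X_def sum.distrib[symmetric] algebra_simps)
qed

lemma basisH_annihilator_eq_0: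
  assumes p: "p > 1" and basis: "basisH p v" and \<rho>: "\<rho> \<in> cgrp (msH p)"
    and annihilates: "\<forall>j\<in>{1..4}. p dvd (\<Sum>i<4. \<rho>!i * v j ! i)"
  shows "\<rho> = replicate 4 0"
proof (rule nth_equalityI)
  show "length \<rho> = length (replicate 4 (0::int))" using \<rho> by (simp add: cgrp_def)
  fix i0 assume "i0 < length \<rho>"
  then have i0: "i0 < 4" using \<rho> by (simp add: cgrp_def)
  define e where "e = map (\<lambda>j. if j = i0 then (1::int) else 0) [0..<4]"
  have "e \<in> cgrp (msH p)" using p by (auto simp: e_def cgrp_def msH_def)
  then obtain c where "lincombH p v c = e" using basis unfolding basisH_def by blast
  then have "p dvd (\<Sum>i<4. \<rho>!i * e!i)"
    using dvd_sum_lincombH[OF annihilates] by metis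
  moreover have "(\<Sum>i<4. \<rho>!i * e!i) = \<rho>!i0"
    using i0 by (simp add: e_def if_distrib cong: if_cong)
  moreover have "0 \<le> \<rho>!i0" "\<rho>!i0 < p" using \<rho> i0 by (auto simp: cgrp_def msH_def)
  ultimately show "\<rho>!i0 = replicate 4 0 ! i0"
    using i0 zdvd_not_zless[of "\<rho>!i0" p] by (cases "\<rho>!i0 = 0") auto
qed

text \<open>twisted_ft is 6^4 N, with N a natural number, plus four terms of real part in [-2, 0];
  so it can only vanish if N = 0 and the character rho is trivial on every v_k.\<close>
lemma twisted_ft_ne_0:
  assumes \<gamma>: "length \<gamma> = 5" and q: "q > 4" and p: "p > 1" and basis: "basisH p v"
    and \<rho>: "\<rho> \<in> cgrp (msH p)" "\<rho> \<noteq> replicate 4 0"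
  shows "twisted_ft enum q v p \<gamma> \<rho> \<noteq> 0"
proof
  assume zero: "twisted_ft enum q v p \<gamma> \<rho> = 0"
  define M where "M = (\<Sum>k\<in>{0..<q}. Api_hits (layer_perm enum k) \<gamma>)"
  define N where "N = (\<Sum>k\<in>{0..<q}. 6^4 * Api_hits (layer_perm enum k) \<gamma>)"
  let ?d = "\<lambda>k. 1 - Re (cpair (msH p) \<rho> (v (nat k)))"
  have d: "0 \<le> ?d k" "?d k \<le> 2" for k
    using Re_cpair_le_1[of "msH p" \<rho> "v (nat k)"] Re_cpair_ge_minus_1[of "msH p" \<rho> "v (nat k)"]
    by auto
  have "real N = (\<Sum>k\<in>{1..4::int}. ?d k)"
    using arg_cong[OF zero, of Re] unfolding twisted_ft_eq[OF \<gamma> q] N_def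
    by (simp add: Re_sum sum_subtractf)
  moreover have "(\<Sum>k\<in>{1..4::int}. ?d k) \<le> 8"
    using sum_mono[of "{1..4::int}" ?d "\<lambda>_. 2"] d by simp
  moreover have "N = 6^4 * M"
    unfolding N_def M_def by (simp add: sum_distrib_left)
  then have "N = 0 \<or> N \<ge> 6^4"
    by (cases "M = 0") auto
  ultimately have "(\<Sum>k\<in>{1..4::int}. ?d k) = 0" by auto
  then have "\<forall>k\<in>{1..4::int}. ?d k = 0"
    using d sum_nonneg_eq_0_iff[of "{1..4::int}" ?d] by simp
  then have trivial: "\<forall>k\<in>{1..4::int}. cpair (msH p) \<rho> (v (nat k)) = 1"
    using cpair_eq_1_if_Re by simp
  have "\<forall>j\<in>{1..4::nat}. p dvd (\<Sum>i<4. \<rho>!i * v j ! i)"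
  proof
    fix j :: nat assume "j \<in> {1..4}"
    then have "int j \<in> {1..4}" by auto
    then have "cpair (msH p) \<rho> (v j) = 1" using trivial by (metis nat_int)
    then show "p dvd (\<Sum>i<4. \<rho>!i * v j ! i)" using cpair_msH_eq_1_iff p by simp
  qed
  then show False
    using basisH_annihilator_eq_0[OF p basis \<rho>(1)] \<rho>(2) by simp
qed

lemma Api_hits_eq_0_if_twisted_ft_eq_0:
  assumes "length \<gamma> = 5" "q > 4" and zero: "twisted_ft enum q v p \<gamma> (replicate 4 0) = 0"
    and k: "k \<in> {0..<q}"
  shows "Api_hits (layer_perm enum k) \<gamma> = 0"
proof -
  have "cpair (msH p) (replicate 4 0) x = 1" for x
    by (rule cpair_eq_1) simp
  then have "(\<Sum>k\<in>{0..<q}. 6^4 * Api_hits (layer_perm enum k) \<gamma>) = 0"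
    using zero unfolding twisted_ft_eq[OF assms(1,2)] by (simp del: of_nat_sum)
  then show ?thesis using k by simp
qed

section \<open>Spectra of P_t\<close>

context
  fixes p q :: int and enum :: "nat \<Rightarrow> nat \<Rightarrow> nat" and B S :: "int list set" and v :: "nat \<Rightarrow> int list"
  assumes p: "p > 1" and q: "q > 120"
    and enum: "bij_betw enum {0..<120} {\<sigma>. \<sigma> permutes {0..<5}}"
    and B: "B \<subseteq> cgrp (msH p)" "B \<noteq> {}"
    and basis: "basisH p v"
    and S: "S \<subseteq> cgrp (msGH q p)"
    and orthogonal: "\<forall>s\<in>S. \<forall>s'\<in>S. s \<noteq> s' \<longrightarrow>
        ft_ind (msGH q p) (Pt p (setA enum q) (tmap v) B) (csub (msGH q p) s s') = 0"
begin

lemma ft_Pt_same_layer: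
  assumes "s \<in> S" "s' \<in> S" "s!5 = s'!5"
  shows "ft_ind (msGH q p) (Pt p (setA enum q) (tmap v) B) (csub (msGH q p) s s')
    = twisted_ft enum q v p (csub (replicate 5 6) (take 5 s) (take 5 s')) (csub (msH p) (drop 6 s) (drop 6 s'))
      * ft_ind (msH p) B (csub (msH p) (drop 6 s) (drop 6 s'))"
proof -
  have "length s = 10" "length s' = 10"
    using assms S mem_cgrp_msGH(1) by blast+
  then have "csub (msGH q p) s s'
      = (csub (replicate 5 6) (take 5 s) (take 5 s') @ [0]) @ csub (msH p) (drop 6 s) (drop 6 s')"
    using assms(3) by (rule csub_msGH_same_layer)
  then show ?thesis
    unfolding twisted_ft_def
    by (simp only:) (rule ft_ind_Pt, auto simp: length_setA length_tmap[OF basis] B csub_def)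
qed

lemma Api_hits_same_fibre:
  assumes s: "s \<in> S" "s' \<in> S" "s \<noteq> s'" "s!5 = s'!5" "drop 6 s = drop 6 s'" and k: "k \<in> {0..<q}"
  shows "Api_hits (layer_perm enum k) (csub (replicate 5 6) (take 5 s) (take 5 s')) = 0"
proof -
  let ?\<delta> = "csub (replicate 5 6) (take 5 s) (take 5 s')"
  have "length (drop 6 s) = 4"
    using s(1) S mem_cgrp_msGH(4) by (force simp: cgrp_def)
  then have "ft_ind (msGH q p) (Pt p (setA enum q) (tmap v) B) (csub (msGH q p) s s')
      = twisted_ft enum q v p ?\<delta> (replicate 4 0) * of_nat (card B)"
    using ft_Pt_same_layer[OF s(1,2,4)] s(5) by (simp add: csub_self ft_ind_def cpair_def)
  moreover have "ft_ind (msGH q p) (Pt p (setA enum q) (tmap v) B) (csub (msGH q p) s s') = 0"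
    using orthogonal s(1-3) by blast
  moreover have "card B \<noteq> 0"
    using B finite_subset[OF B(1)] by simp
  ultimately have "twisted_ft enum q v p ?\<delta> (replicate 4 0) = 0"
    by simp
  then show ?thesis
    using q k by (intro Api_hits_eq_0_if_twisted_ft_eq_0) (auto simp: csub_def)
qed

lemma card_fibre_lt: "card {s\<in>S. s!5 = c \<and> drop 6 s = \<rho>} < 6^4"
proof -
  define F where "F = {s\<in>S. s!5 = c \<and> drop 6 s = \<rho>}"
  have F: "F \<subseteq> S" by (auto simp: F_def)
  have "inj_on (take 5) F"
  proof (rule inj_onI)
    fix s s' assume s: "s \<in> F" "s' \<in> F" "take 5 s = take 5 s'"
    have "length s = 10" "length s' = 10"
      using s F S mem_cgrp_msGH(1) by blast+
    then show "s = s'"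
      using list_10_split[of s] list_10_split[of s'] s by (auto simp: F_def)
  qed
  then have card_D: "card (take 5 ` F) = card F" by (rule card_image)
  have "packing (take 5 ` F) (perm_vec \<sigma>)" if \<sigma>: "\<sigma> permutes {0..<5}" for \<sigma>
  proof (rule packing_if_Api_hits_eq_0, clarify)
    obtain k where "k \<in> {0..<q}" "layer_perm enum k = \<sigma>"
      using ex_layer_perm[OF enum \<sigma>, of q] q by auto
    moreover fix s s' assume "s \<in> F" "s' \<in> F" "take 5 s \<noteq> take 5 s'"
    ultimately show "Api_hits \<sigma> (csub (replicate 5 6) (take 5 s) (take 5 s')) = 0"
      using Api_hits_same_fibre[of s s' k] by (auto simp: F_def)
  qed
  moreover have "take 5 ` F \<subseteq> Z6_5" using F S mem_cgrp_msGH(2) by auto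
  ultimately show ?thesis
    using card_lt_if_packing card_D by (metis F_def)
qed

lemma card_layer_H_le: "card (drop 6 ` {s\<in>S. s!5 = c}) \<le> card B"
proof (rule card_le_if_orthogonal)
  let ?R = "drop 6 ` {s\<in>S. s!5 = c}"
  have R: "?R \<subseteq> cgrp (msH p)" using S mem_cgrp_msGH(4) by auto
  show "finite B" using B(1) by (rule finite_subset) simp
  show "B \<noteq> {}" by (fact B(2))
  show "finite ?R" using R by (rule finite_subset) simp
  show "\<forall>\<rho>\<in>?R. \<forall>\<rho>'\<in>?R. \<rho> \<noteq> \<rho>' \<longrightarrow> ft_ind (msH p) B (csub (msH p) \<rho> \<rho>') = 0"
  proof (intro ballI impI)
    fix \<rho> \<rho>' assume \<rho>: "\<rho> \<in> ?R" "\<rho>' \<in> ?R" "\<rho> \<noteq> \<rho>'"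
    then obtain s s' where s: "s \<in> S" "s' \<in> S" "s!5 = s'!5" "\<rho> = drop 6 s" "\<rho>' = drop 6 s'"
      by auto
    have "csub (msH p) \<rho> \<rho>' \<in> cgrp (msH p)"
      using p by (intro csub_in_cgrp) (simp add: msH_def)
    moreover have "csub (msH p) \<rho> \<rho>' \<noteq> replicate 4 0"
      using csub_eq_0_iff[of \<rho> "msH p" \<rho>'] \<rho> R by auto
    ultimately have "twisted_ft enum q v p (csub (replicate 5 6) (take 5 s) (take 5 s')) (csub (msH p) \<rho> \<rho>') \<noteq> 0"
      using q by (intro twisted_ft_ne_0[OF _ _ p basis]) (auto simp: csub_def)
    moreover have "s \<noteq> s'" using \<rho> s by auto
    ultimately show "ft_ind (msH p) B (csub (msH p) \<rho> \<rho>') = 0"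
      using orthogonal s ft_Pt_same_layer[OF s(1-3)] by simp
  qed
qed

lemma card_layer_le: "card {s\<in>S. s!5 = c} \<le> card B * (6^4 - 1)"
proof -
  define R where "R = drop 6 ` {s\<in>S. s!5 = c}"
  have "R \<subseteq> cgrp (msH p)"
    using S mem_cgrp_msGH(4) by (auto simp: R_def)
  then have "finite R"
    by (rule finite_subset) simp
  have "{s\<in>S. s!5 = c} = (\<Union>\<rho>\<in>R. {s\<in>S. s!5 = c \<and> drop 6 s = \<rho>})" by (auto simp: R_def)
  then have "card {s\<in>S. s!5 = c} \<le> (\<Sum>\<rho>\<in>R. card {s\<in>S. s!5 = c \<and> drop 6 s = \<rho>})"
    using card_UN_le[OF \<open>finite R\<close>] by simp
  also have "\<dots> \<le> (\<Sum>\<rho>\<in>R. 6^4 - 1)"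
  proof (rule sum_mono)
    fix \<rho> show "card {s\<in>S. s!5 = c \<and> drop 6 s = \<rho>} \<le> 6^4 - 1"
      using card_fibre_lt[of c \<rho>] by simp
  qed
  also have "\<dots> \<le> card B * (6^4 - 1)"
    using card_layer_H_le by (simp add: R_def)
  finally show ?thesis .
qed

lemma card_spectrum_le: "card S \<le> nat q * card B * (6^4 - 1)"
proof -
  have "S = (\<Union>c\<in>{0..<q}. {s\<in>S. s!5 = c})"
    using S mem_cgrp_msGH(3) by fastforce
  then have "card S \<le> (\<Sum>c\<in>{0..<q}. card {s\<in>S. s!5 = c})"
    by (metis card_UN_le finite_atLeastLessThan_int)
  also have "\<dots> \<le> (\<Sum>c\<in>{0..<q}. card B * (6^4 - 1))"
    by (intro sum_mono card_layer_le)
  finally show ?thesis by simp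
qed

end

theorem lemma3p5:
  fixes p q :: nat and enum :: "nat \<Rightarrow> nat \<Rightarrow> nat"
    and B :: "int list set" and v :: "nat \<Rightarrow> int list"
  assumes "prime p" and "p > 3" and "prime q" and "q > 6 * p ^ 4"
    and "bij_betw enum {0..<120} {\<sigma>. \<sigma> permutes {0..<5}}"
    and "spectral_in (msH (int p)) B" and "card B = 2 * p"
    and "basisH (int p) v"
  shows "\<not> spectral_in (msGH (int q) (int p))
           (Pt (int p) (setA enum (int q)) (tmap v) B)"
proof
  let ?P = "Pt (int p) (setA enum (int q)) (tmap v) B"
  assume "spectral_in (msGH (int q) (int p)) ?P"
  then obtain S where S: "S \<subseteq> cgrp (msGH (int q) (int p))" "card S = card ?P"
    "\<forall>s\<in>S. \<forall>s'\<in>S. s \<noteq> s' \<longrightarrow> ft_ind (msGH (int q) (int p)) ?P (csub (msGH (int q) (int p)) s s') = 0"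
    unfolding spectral_in_def by blast
  have B: "B \<subseteq> cgrp (msH (int p))" "B \<noteq> {}"
    using assms(2,6,7) unfolding spectral_in_def by auto
  have "p ^ 4 \<ge> 4 ^ 4" using assms(2) by (intro power_mono) auto
  then have "int q > 120" using assms(4) by simp
  then have "card S \<le> q * card B * (6^4 - 1)"
    using card_spectrum_le[of "int p" "int q" enum B v S] assms(2,5,8) B S by simp
  moreover have "card S = q * 6^4 * card B"
    using S(2) B(1) card_Pt[of "setA enum (int q)"] card_setA[OF assms(5)] length_setA by simp
  moreover have "q > 0" and "card B > 0"
    using \<open>int q > 120\<close> assms(2,7) by auto
  ultimately show False
    by simp
qed

end
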